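(* Let $q\ge 2$ and $n\ge 1$ be integers and let $m=n+1$. Under uniform transmission over the $1$-insertion channel with input length $n$, $$\max_{{\boldsymbol y}\in\Sigma_q^{m}} \mathsf{H}^{\mathsf{In}}_{1\text{-}\mathsf{Ins}}({\boldsymbol y}) = \log_2 m,$$ and this maximum is attained only by channel outputs ${\boldsymbol y}$ with exactly $m$ runs.
   Context: $\Sigma_q=\{0,1,\dots,q-1\}$. For sequences ${\boldsymbol x}$ of length $\ell$ and ${\boldsymbol y}$ of length $N\ge \ell$, the embedding number $\omega_{{\boldsymbol x}}({\boldsymbol y})$ is the number of index tuples $1\le i_1<\dots<i_\ell\le N$ with $y_{i_j}=x_j$ for all $j$. The $k$-insertion channel with input length $n$ maps ${\boldsymbol x}\in\Sigma_q^n$ to ${\boldsymbol y}\in\Sigma_q^{n+k}$ with probability $\Pr\{{\boldsymbol y}\mid{\boldsymbol x}\}=\omega_{{\boldsymbol x}}({\boldsymbol y})/\big(\binom{n+k}{k}q^k\big)$ (exactly $k$ symbols are inserted, locations and values chosen uniformly). Under uniform transmission the input $X$ is uniform on $\Sigma_q^n$, and for an output ${\boldsymbol y}$ the input entropy is $\mathsf{H}^{\mathsf{In}}_{k\text{-}\mathsf{Ins}}({\boldsymbol y})=H(X\mid Y={\boldsymbol y})=-\sum_{{\boldsymbol x}}P({\boldsymbol x}\mid{\boldsymbol y})\log_2 P({\boldsymbol x}\mid{\boldsymbol y})$ with $P({\boldsymbol x}\mid {\boldsymbol y})=\Pr\{{\boldsymbol y}\mid{\boldsymbol x}\}/\sum_{{\boldsymbol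 x}'\in\Sigma_q^n}\Pr\{{\boldsymbol y}\mid{\boldsymbol x}'\}$. A run is a maximal block of identical consecutive symbols. *)

theory Defs
  imports Complex_Main
begin

definition words :: "nat \<Rightarrow> nat \<Rightarrow> nat list set" where
  "words q n = {xs. length xs = n \<and> set xs \<subseteq> {..<q}}"

text \<open>Embedding number: number of increasing index tuples (= index subsets of size |x|)
  at which y reads x.\<close>
definition embedding_number :: "nat list \<Rightarrow> nat list \<Rightarrow> nat" where
  "embedding_number x y =
     card {I. I \<subseteq> {..<length y} \<and> card I = length x \<and> nths y I = x}"

definition ins_prob :: "nat \<Rightarrow> nat \<Rightarrow> nat \<Rightarrow> nat list \<Rightarrow> nat list \<Rightarrow> real" where
  "ins_prob q n k x y =
     real (embedding_number x y) / (real ((n + k) choose k) * real q ^ k)"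

definition posterior :: "nat \<Rightarrow> nat \<Rightarrow> nat \<Rightarrow> nat list \<Rightarrow> nat list \<Rightarrow> real" where
  "posterior q n k y x =
     ins_prob q n k x y / (\<Sum>x'\<in>words q n. ins_prob q n k x' y)"

definition input_entropy :: "nat \<Rightarrow> nat \<Rightarrow> nat \<Rightarrow> nat list \<Rightarrow> real" where
  "input_entropy q n k y =
     - (\<Sum>x\<in>words q n. let p = posterior q n k y x in
          if p = 0 then 0 else p * log 2 p)"

definition num_runs :: "nat list \<Rightarrow> nat" where
  "num_runs y = length (remdups_adj y)"

end

theory Submission
  imports Defs
begin

text \<open>
  An output \<open>y\<close> of length \<open>m = n + 1\<close> embeds \<open>x\<close> once for every position whose deletion
  from \<open>y\<close> leaves \<open>x\<close>. Hence, given \<open>Y = y\<close>, the input \<open>X\<close> is distributed as the word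
  obtained by deleting a uniformly random position of \<open>y\<close>. Such an image of the uniform
  distribution on \<open>m\<close> points has entropy at most \<open>log m\<close>, with equality exactly when the
  \<open>m\<close> deletions are pairwise distinct; and two deletions coincide as soon as two adjacent
  symbols of \<open>y\<close> agree, so equality means that \<open>y\<close> has \<open>m\<close> runs. An alternating word
  \<open>0101\<dots>\<close> attains the bound.
\<close>

text \<open>The entropy of \<open>f U\<close> for \<open>U\<close> uniform on \<open>I\<close>, summed over a finite superset \<open>W\<close> of the range.\<close>
definition fibre_entropy :: "('a \<Rightarrow> 'b) \<Rightarrow> 'a set \<Rightarrow> 'b set \<Rightarrow> real" where
  "fibre_entropy f I W =
     - (\<Sum>x\<in>W. let p = real (card {i \<in> I. f i = x}) / real (card I) in
          if p = 0 then 0 else p * log 2 p)"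

lemma sum_card_fibres:
  "finite I \<Longrightarrow> finite W \<Longrightarrow> f ` I \<subseteq> W \<Longrightarrow> (\<Sum>x\<in>W. card {i \<in> I. f i = x}) = card I"
  using sum.group[of I W f "\<lambda>_. 1::nat"] by simp

lemma card_fibre_pos: "finite I \<Longrightarrow> i \<in> I \<Longrightarrow> card {j \<in> I. f j = f i} > 0"
  by (auto simp: card_gt_0_iff)

lemma fibre_entropy_eq:
  assumes "finite I" "I \<noteq> {}" "finite W" "f ` I \<subseteq> W"
  shows "fibre_entropy f I W
    = log 2 (card I) - (\<Sum>i\<in>I. log 2 (card {j \<in> I. f j = f i})) / card I"
proof -
  define N where "N = real (card I)"
  define c where "c i = real (card {j \<in> I. f j = f i})" for i
  have N: "N > 0"
    using assms by (simp add: N_def card_gt_0_iff)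
  \<comment> \<open>spread the term of \<open>x\<close> evenly over the points of its fibre\<close>
  have fibre_term: "(let p = real (card {i \<in> I. f i = x}) / N in if p = 0 then 0 else p * log 2 p)
      = (\<Sum>i\<in>{i \<in> I. f i = x}. log 2 (c i / N) / N)" for x
  proof (cases "{i \<in> I. f i = x} = {}")
    case False
    have "(\<Sum>i\<in>{i \<in> I. f i = x}. log 2 (c i / N) / N)
        = (\<Sum>i\<in>{i \<in> I. f i = x}. log 2 (card {i \<in> I. f i = x} / N) / N)"
      by (rule sum.cong) (auto simp: c_def)
    then show ?thesis
      using False N assms(1) by (simp add: Let_def card_gt_0_iff)
  qed (simp only: Let_def, simp)
  have "fibre_entropy f I W = - (\<Sum>x\<in>W. \<Sum>i\<in>{i \<in> I. f i = x}. log 2 (c i / N) / N)"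
    unfolding fibre_entropy_def N_def[symmetric] fibre_term ..
  also have "\<dots> = - (\<Sum>i\<in>I. log 2 (c i / N) / N)"
    by (simp only: sum.group[OF assms(1,3,4)])
  also have "\<dots> = - (\<Sum>i\<in>I. (log 2 (c i) - log 2 N) / N)"
    using card_fibre_pos[OF assms(1), of _ f] N
    by (intro arg_cong[where f=uminus] sum.cong) (simp_all add: c_def log_divide)
  also have "\<dots> = log 2 N - (\<Sum>i\<in>I. log 2 (c i)) / N"
    using N by (simp add: sum_subtractf sum_divide_distrib[symmetric] N_def field_simps)
  finally show ?thesis
    by (simp add: N_def c_def)
qed

lemma fibre_entropy_le_log_card:
  assumes "finite I" "I \<noteq> {}" "finite W" "f ` I \<subseteq> W"
  shows "fibre_entropy f I W \<le> log 2 (card I)"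
proof -
  have "(\<Sum>i\<in>I. log 2 (card {j \<in> I. f j = f i})) \<ge> 0"
    using card_fibre_pos[OF assms(1), of _ f] by (intro sum_nonneg) (simp add: Suc_le_eq)
  then show ?thesis
    using fibre_entropy_eq[OF assms] by simp
qed

lemma fibre_entropy_eq_log_card_iff:
  assumes "finite I" "I \<noteq> {}" "finite W" "f ` I \<subseteq> W"
  shows "fibre_entropy f I W = log 2 (card I) \<longleftrightarrow> inj_on f I"
proof -
  have log_nonneg: "\<And>i. i \<in> I \<Longrightarrow> log 2 (card {j \<in> I. f j = f i}) \<ge> 0"
    using card_fibre_pos[OF assms(1), of _ f] by (simp add: Suc_le_eq)
  have "fibre_entropy f I W = log 2 (card I) \<longleftrightarrow> (\<Sum>i\<in>I. log 2 (card {j \<in> I. f j = f i})) = 0"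
    using fibre_entropy_eq[OF assms] assms(1,2) by simp
  also have "\<dots> \<longleftrightarrow> (\<forall>i\<in>I. log 2 (card {j \<in> I. f j = f i}) = 0)"
    using assms(1) log_nonneg by (simp add: sum_nonneg_eq_0_iff)
  also have "\<dots> \<longleftrightarrow> (\<forall>i\<in>I. card {j \<in> I. f j = f i} = 1)"
    using card_fibre_pos[OF assms(1), of _ f] by (auto simp: log_def)
  also have "\<dots> \<longleftrightarrow> (\<forall>i\<in>I. {j \<in> I. f j = f i} = {i})"
    by (auto simp: card_1_singleton_iff) (metis (mono_tags, lifting) mem_Collect_eq singletonD)
  also have "\<dots> \<longleftrightarrow> inj_on f I"
    unfolding inj_on_def by blast
  finally show ?thesis .
qed

definition delete_at :: "'a list \<Rightarrow> nat \<Rightarrow> 'a list" where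
  "delete_at xs i = take i xs @ drop (Suc i) xs"

lemma nth_delete_at:
  "Suc j < length xs \<Longrightarrow> delete_at xs i ! j = (if j < i then xs ! j else xs ! Suc j)"
  by (simp add: delete_at_def nth_append min_def)

lemma delete_at_Suc_eq:
  assumes "Suc i < length xs" "xs ! i = xs ! Suc i"
  shows "delete_at xs (Suc i) = delete_at xs i"
  using assms by (simp add: delete_at_def take_Suc_conv_app_nth Cons_nth_drop_Suc[symmetric])

lemma nths_delete_at:
  assumes "i < length xs"
  shows "nths xs ({..<length xs} - {i}) = delete_at xs i"
proof -
  let ?A = "{..<length xs} - {i}"
  have "xs = take i xs @ xs ! i # drop (Suc i) xs"
    using assms by (simp add: id_take_nth_drop)
  then have "nths xs ?A = nths (take i xs) ?A @ nths (xs ! i # drop (Suc i) xs) {j. j + i \<in> ?A}"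
    using assms by (metis length_take min_absorb2 less_imp_le nths_append)
  also have "nths (take i xs) ?A = take i xs"
    using assms by (intro nths_all) auto
  also have "nths (xs ! i # drop (Suc i) xs) {j. j + i \<in> ?A} = drop (Suc i) xs"
    using assms by (simp add: nths_Cons, intro nths_all) auto
  finally show ?thesis
    by (simp add: delete_at_def)
qed

lemma embedding_number_eq_card_delete_at:
  assumes "length y = Suc (length x)"
  shows "embedding_number x y = card {i \<in> {..<length y}. delete_at y i = x}"
proof -
  let ?co = "\<lambda>i. {..<length y} - {i}"
  let ?T = "{i \<in> {..<length y}. delete_at y i = x}"
  let ?S = "{I. I \<subseteq> {..<length y} \<and> card I = length x \<and> nths y I = x}"
  have "?S = ?co ` ?T"
  proof (intro equalityI subsetI)
    fix I assume I: "I \<in> ?S"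
    then have "card ({..<length y} - I) = 1"
      using assms card_Diff_subset[of I "{..<length y}"] finite_subset[of I "{..<length y}"] by auto
    then obtain i where i: "{..<length y} - I = {i}"
      by (auto simp: card_1_singleton_iff)
    then have "i < length y" "I = ?co i"
      using I by auto
    moreover from this have "delete_at y i = x"
      using I nths_delete_at[of i y] by simp
    ultimately show "I \<in> ?co ` ?T"
      by auto
  next
    fix I assume "I \<in> ?co ` ?T"
    then obtain i where "i < length y" "delete_at y i = x" "I = ?co i"
      by auto
    then show "I \<in> ?S"
      using assms nths_delete_at[of i y] by auto
  qed
  moreover have "inj_on ?co ?T"
    by (rule inj_onI) auto
  ultimately show ?thesis
    unfolding embedding_number_def by (simp add: card_image)
qed

lemma inj_on_delete_at_iff_distinct_adj:
  "inj_on (delete_at xs) {..<length xs} \<longleftrightarrow> distinct_adj xs"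
proof
  assume "inj_on (delete_at xs) {..<length xs}"
  then show "distinct_adj xs"
    unfolding distinct_adj_conv_nth
    by (metis delete_at_Suc_eq Suc_lessD lessThan_iff n_not_Suc_n inj_on_eq_iff)
next
  assume adj: "distinct_adj xs"
  have "delete_at xs i \<noteq> delete_at xs j" if "i < j" "j < length xs" for i j
  proof
    assume "delete_at xs i = delete_at xs j"
    then have "xs ! Suc i = xs ! i"
      using that nth_delete_at[of i xs i] nth_delete_at[of i xs j] by simp
    then show False
      using adj that distinct_adj_nth[of xs i] by simp
  qed
  then show "inj_on (delete_at xs) {..<length xs}"
    by (intro inj_onI) (metis lessThan_iff linorder_neqE_nat)
qed

lemma finite_words: "finite (words q n)"
  using finite_lists_length_eq[of "{..<q}" n] by (simp add: words_def conj_commute)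

lemma delete_at_in_words: "y \<in> words q (Suc n) \<Longrightarrow> i < Suc n \<Longrightarrow> delete_at y i \<in> words q n"
  unfolding words_def delete_at_def
  using set_take_subset[of i y] set_drop_subset[of "Suc i" y] by auto

lemma posterior_one_insertion:
  assumes "q > 0" "y \<in> words q (Suc n)" "x \<in> words q n"
  shows "posterior q n 1 y x = card {i \<in> {..<Suc n}. delete_at y i = x} / Suc n"
proof -
  define e where "e x = card {i \<in> {..<Suc n}. delete_at y i = x}" for x
  have ins_prob_eq: "ins_prob q n 1 x y = e x / (real (Suc n) * real q)" if "x \<in> words q n" for x
    using that assms(2) embedding_number_eq_card_delete_at[of y x]
    by (simp add: ins_prob_def e_def words_def algebra_simps)
  have "(\<Sum>x\<in>words q n. e x) = Suc n"
    unfolding e_def using delete_at_in_words[OF assms(2)]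
    by (subst sum_card_fibres) (auto simp: finite_words)
  then have "(\<Sum>x\<in>words q n. real (e x)) / (real (Suc n) * real q) = 1 / q"
    using assms(1) by (simp flip: of_nat_sum)
  then have "(\<Sum>x\<in>words q n. ins_prob q n 1 x y) = 1 / q"
    by (simp add: ins_prob_eq sum_divide_distrib del: One_nat_def)
  then show ?thesis
    using assms by (simp add: posterior_def ins_prob_eq[OF assms(3)] e_def del: One_nat_def)
qed

lemma input_entropy_one_insertion:
  assumes "q > 0" "y \<in> words q (Suc n)"
  shows "input_entropy q n 1 y = fibre_entropy (delete_at y) {..<Suc n} (words q n)"
  unfolding input_entropy_def fibre_entropy_def
  by (simp add: posterior_one_insertion[OF assms] cong: sum.cong del: One_nat_def)

lemma input_entropy_one_insertion_le:
  assumes "q > 0" "y \<in> words q (Suc n)"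
  shows "input_entropy q n 1 y \<le> log 2 (Suc n)"
proof -
  have "{..<Suc n} \<noteq> {}" "delete_at y ` {..<Suc n} \<subseteq> words q n"
    using delete_at_in_words[OF assms(2)] by auto
  from fibre_entropy_le_log_card[OF finite_lessThan this(1) finite_words this(2)] show ?thesis
    unfolding input_entropy_one_insertion[OF assms] by simp
qed

lemma input_entropy_one_insertion_eq_log_iff:
  assumes "q > 0" "y \<in> words q (Suc n)"
  shows "input_entropy q n 1 y = log 2 (Suc n) \<longleftrightarrow> num_runs y = Suc n"
proof -
  have length_y: "length y = Suc n"
    using assms(2) by (simp add: words_def)
  have "{..<Suc n} \<noteq> {}" "delete_at y ` {..<Suc n} \<subseteq> words q n"
    using delete_at_in_words[OF assms(2)] by auto
  from fibre_entropy_eq_log_card_iff[OF finite_lessThan this(1) finite_words this(2)]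
  have "input_entropy q n 1 y = log 2 (Suc n) \<longleftrightarrow> inj_on (delete_at y) {..<length y}"
    unfolding input_entropy_one_insertion[OF assms] length_y by simp
  also have "\<dots> \<longleftrightarrow> num_runs y = length y"
    unfolding inj_on_delete_at_iff_distinct_adj distinct_adj_conv_length_remdups_adj num_runs_def ..
  finally show ?thesis
    using length_y by simp
qed

definition alternating_word :: "nat \<Rightarrow> nat list" where
  "alternating_word m = map (\<lambda>i. i mod 2) [0..<m]"

lemma alternating_word_in_words: "q \<ge> 2 \<Longrightarrow> alternating_word m \<in> words q m"
  by (auto simp: alternating_word_def words_def)

lemma num_runs_alternating_word: "num_runs (alternating_word m) = m"
proof -
  have "distinct_adj (alternating_word m)"
    by (auto simp: alternating_word_def distinct_adj_conv_nth mod_Suc)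
  then show ?thesis
    by (simp add: num_runs_def distinct_adj_conv_length_remdups_adj alternating_word_def)
qed

theorem theorem7:
  fixes q n m :: nat
  assumes "q \<ge> 2" and "n \<ge> 1" and "m = n + 1"
  shows "Max (input_entropy q n 1 ` words q m) = log 2 (real m)
    \<and> (\<forall>y\<in>words q m. input_entropy q n 1 y = Max (input_entropy q n 1 ` words q m)
          \<longrightarrow> num_runs y = m)"
proof -
  have q: "q > 0"
    using assms(1) by simp
  have runs_iff: "input_entropy q n 1 y = log 2 m \<longleftrightarrow> num_runs y = m" if "y \<in> words q m" for y
    using input_entropy_one_insertion_eq_log_iff[OF q] that assms(3) by simp
  have z: "alternating_word m \<in> words q m" "input_entropy q n 1 (alternating_word m) = log 2 m"
    using alternating_word_in_words[OF assms(1)] num_runs_alternating_word runs_iff by auto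
  have "Max (input_entropy q n 1 ` words q m) = log 2 m"
  proof (rule Max_eqI)
    show "H \<le> log 2 m" if "H \<in> input_entropy q n 1 ` words q m" for H
      using that input_entropy_one_insertion_le[OF q] assms(3) by auto
    show "log 2 m \<in> input_entropy q n 1 ` words q m"
      using z by (metis image_eqI)
  qed (simp add: finite_words)
  then show ?thesis
    using runs_iff by auto
qed

end
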